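(* Let $\eta>0$, let $m^1,m^2,\dots\in\mathbb{R}^n$ be arbitrary loss predictions and $\ell^1,\ell^2,\dots\in\mathbb{R}^n$ arbitrary losses, set $x^0=\mathbf{1}/n$ and $v^t=\langle m^t,x^{t-1}\rangle\mathbf{1}-m^t$. (i) The procedure in $\Gamma$ that at each time $t$ takes $\theta^t=\arg\min_{\theta\in\mathbb{R}^n_{\ge0}}\{\langle L^{t-1}-v^t,\theta\rangle+\tfrac{1}{2\eta}\|\theta\|_2^2\}$ with $L^{t-1}=-\sum_{\tau<t}u(x^\tau,\ell^\tau)$ (predictive FTRL on $\mathbb{R}^n_{\ge0}$ with regularizer $\tfrac12\|\cdot\|_2^2$ and prediction $-v^t$) and plays $x^t=g(\theta^t)$ produces exactly the iterates of PRM. (ii) The procedure that sets $z^0=0$, at time $t$ takes $\theta^t=\arg\min_{\theta\in\mathbb{R}^n_{\ge0}}\{\langle -v^t,\theta\rangle+\tfrac{1}{2\eta}\|\theta-z^{t-1}\|_2^2\}$, plays $x^t=g(\theta^t)$, and after observing $\ell^t$ sets $z^t=\arg\min_{z\in\mathbb{R}^n_{\ge0}}\{\langle -u(x^t,\ell^t),z\rangle+\tfrac1{2\eta}\|z-z^{t-1}\|_2^2\}$ (predictive OMD) produces exactly the iterates of PRM$^+$. In both cases the iterates are independent of $\eta$ (with the same fixed point of $\Delta^n$ used whenever $\theta^t=0$). (iii) Both PRM and PRM$^+$ satisfy, for every $T\ge1$ and every $\hat{x}\in\Delta^n$, \[ R^T(\hat{x})=\sum_{t=1}^T\langle\ell^t,x^t-\hat{x}\rangle\le\sqrt2\Big(\sum_{t=1}^T\big\|\langle\ell^t,x^t\rangle\mathbf{1}-\langle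 m^t,x^{t-1}\rangle\mathbf{1}-(\ell^t-m^t)\big\|_2^2\Big)^{1/2}. \]
   Context: $\Delta^n=\{x\in\mathbb{R}^n_{\ge0}:\|x\|_1=1\}$; $\mathbf{1}$ is the all-ones vector; $[\cdot]^+$ is componentwise positive part. The game $\Gamma$ has Player 1 action set $\Delta^n$, Player 2 action set $\mathbb{R}^n$ (loss vectors), target set $\mathbb{R}^n_{\le0}$, and payoff $u(x,\ell)=\langle\ell,x\rangle\mathbf{1}-\ell$. For $a\in\mathbb{R}^n_{\ge0}$, $g(a)=a/\|a\|_1$ if $a\ne0$ and a fixed arbitrary point $\bar{x}\in\Delta^n$ if $a=0$. Predictive regret matching (PRM): $r^0=0$, $x^0=\mathbf{1}/n$; at time $t$, given prediction $m^t$, $\theta^t=[r^{t-1}+\langle m^t,x^{t-1}\rangle\mathbf{1}-m^t]^+$ and $x^t=g(\theta^t)$; after observing $\ell^t$, $r^t=r^{t-1}+\langle\ell^t,x^t\rangle\mathbf{1}-\ell^t$. Predictive regret matching$^+$ (PRM$^+$): $z^0=0$, $x^0=\mathbf{1}/n$; at time $t$, $\theta^t=[z^{t-1}+\langle m^t,x^{t-1}\rangle\mathbf{1}-m^t]^+$ and $x^t=g(\theta^t)$; after observing $\ell^t$, $z^t=[z^{t-1}+\langle\ell^t,x^t\rangle\mathbf{1}-\ell^t]^+$. *)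

theory Defs
  imports "HOL-Analysis.Analysis"
begin

definition ones :: "real ^ 'n" where
  "ones = (\<chi> i. 1)"

definition prob_simplex :: "(real ^ 'n) set" where
  "prob_simplex = {x. (\<forall>i. 0 \<le> x $ i) \<and> (\<Sum>i\<in>UNIV. \<bar>x $ i\<bar>) = 1}"

definition nonneg_orthant :: "(real ^ 'n) set" where
  "nonneg_orthant = {x. \<forall>i. 0 \<le> x $ i}"

definition pospart :: "real ^ 'n \<Rightarrow> real ^ 'n" where
  "pospart a = (\<chi> i. max 0 (a $ i))"

definition l1norm :: "real ^ 'n \<Rightarrow> real" where
  "l1norm a = (\<Sum>i\<in>UNIV. \<bar>a $ i\<bar>)"

definition gmap :: "real ^ 'n \<Rightarrow> real ^ 'n \<Rightarrow> real ^ 'n" where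
  "gmap xbar a = (if a = 0 then xbar else (1 / l1norm a) *\<^sub>R a)"

definition payoff :: "real ^ 'n \<Rightarrow> real ^ 'n \<Rightarrow> real ^ 'n" where
  "payoff x l = (inner l x) *\<^sub>R ones - l"

definition x0 :: "real ^ 'n" where
  "x0 = (\<chi> i. 1 / real CARD('n))"

definition vpred :: "real ^ 'n \<Rightarrow> real ^ 'n \<Rightarrow> real ^ 'n" where
  "vpred mt xprev = (inner mt xprev) *\<^sub>R ones - mt"

primrec prm :: "real ^ 'n \<Rightarrow> (nat \<Rightarrow> real ^ 'n) \<Rightarrow> (nat \<Rightarrow> real ^ 'n) \<Rightarrow> nat
    \<Rightarrow> (real ^ 'n) \<times> (real ^ 'n)" where
  "prm xbar m l 0 = (0, x0)"
| "prm xbar m l (Suc t) =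
     (let (r, x) = prm xbar m l t;
          \<theta> = pospart (r + vpred (m (Suc t)) x);
          x' = gmap xbar \<theta>
      in (r + payoff x' (l (Suc t)), x'))"

primrec prm_plus :: "real ^ 'n \<Rightarrow> (nat \<Rightarrow> real ^ 'n) \<Rightarrow> (nat \<Rightarrow> real ^ 'n) \<Rightarrow> nat
    \<Rightarrow> (real ^ 'n) \<times> (real ^ 'n)" where
  "prm_plus xbar m l 0 = (0, x0)"
| "prm_plus xbar m l (Suc t) =
     (let (z, x) = prm_plus xbar m l t;
          \<theta> = pospart (z + vpred (m (Suc t)) x);
          x' = gmap xbar \<theta>
      in (pospart (z + payoff x' (l (Suc t))), x'))"

primrec ftrl :: "real \<Rightarrow> real ^ 'n \<Rightarrow> (nat \<Rightarrow> real ^ 'n) \<Rightarrow> (nat \<Rightarrow> real ^ 'n) \<Rightarrow> nat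
    \<Rightarrow> (real ^ 'n) \<times> (real ^ 'n)" where
  "ftrl \<eta> xbar m l 0 = (0, x0)"
| "ftrl \<eta> xbar m l (Suc t) =
     (let (L, x) = ftrl \<eta> xbar m l t;
          v = vpred (m (Suc t)) x;
          \<theta> = arg_min (\<lambda>\<theta>. inner (L - v) \<theta> + (1 / (2 * \<eta>)) * (norm \<theta>)\<^sup>2)
                 (\<lambda>\<theta>. \<theta> \<in> nonneg_orthant);
          x' = gmap xbar \<theta>
      in (L - payoff x' (l (Suc t)), x'))"

primrec omd :: "real \<Rightarrow> real ^ 'n \<Rightarrow> (nat \<Rightarrow> real ^ 'n) \<Rightarrow> (nat \<Rightarrow> real ^ 'n) \<Rightarrow> nat
    \<Rightarrow> (real ^ 'n) \<times> (real ^ 'n)" where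
  "omd \<eta> xbar m l 0 = (0, x0)"
| "omd \<eta> xbar m l (Suc t) =
     (let (z, x) = omd \<eta> xbar m l t;
          v = vpred (m (Suc t)) x;
          \<theta> = arg_min (\<lambda>\<theta>. inner (- v) \<theta> + (1 / (2 * \<eta>)) * (norm (\<theta> - z))\<^sup>2)
                 (\<lambda>\<theta>. \<theta> \<in> nonneg_orthant);
          x' = gmap xbar \<theta>;
          z' = arg_min (\<lambda>z'. inner (- payoff x' (l (Suc t))) z' + (1 / (2 * \<eta>)) * (norm (z' - z))\<^sup>2)
                 (\<lambda>z'. z' \<in> nonneg_orthant)
      in (z', x'))"

definition regret_bound :: "(nat \<Rightarrow> real ^ 'n) \<Rightarrow> (nat \<Rightarrow> real ^ 'n) \<Rightarrow> (nat \<Rightarrow> real ^ 'n) \<Rightarrow> bool" where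
  "regret_bound x m l \<longleftrightarrow>
     (\<forall>T \<ge> 1. \<forall>xhat \<in> prob_simplex.
        (\<Sum>t = 1..T. inner (l t) (x t - xhat))
        \<le> sqrt 2 * sqrt (\<Sum>t = 1..T.
              (norm ((inner (l t) (x t)) *\<^sub>R ones - (inner (m t) (x (t - 1))) *\<^sub>R ones - (l t - m t)))\<^sup>2))"

end

theory Submission
  imports Defs
begin

text \<open>All minimisation problems are proximal steps over the nonnegative orthant, solved by the
  positive part: the minimiser of \<open>\<langle>a, \<theta>\<rangle> + \<parallel>\<theta> - z\<parallel>\<^sup>2 / (2\<eta>)\<close> is \<open>[z - \<eta> a]\<^sup>+\<close>. By induction the FTRL
  iterate is \<open>\<eta> [r + v]\<^sup>+\<close> and the OMD state is \<open>\<eta> z\<close>, and since \<open>g\<close> is invariant under positive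
  scaling the played points are those of PRM and PRM+, whatever \<open>\<eta>\<close> is.

  For the regret bound the key fact is Blackwell's orthogonality \<open>\<langle>\<theta>, u(g(\<theta>), l)\<rangle> = 0\<close> for
  \<open>\<theta> \<ge> 0\<close>. For PRM it makes \<open>\<parallel>[r]\<^sup>+\<parallel>\<^sup>2\<close> grow by at most \<open>\<parallel>u\<^sup>t - v\<^sup>t\<parallel>\<^sup>2\<close> per round; for PRM+ it
  makes \<open>2\<langle>\<Sum>u, y\<rangle> + \<parallel>y - z\<^sup>t\<parallel>\<^sup>2\<close> grow by at most the same amount, for every \<open>y \<ge> 0\<close>. Either way
  \<open>2\<langle>r\<^sup>T, y\<rangle> - \<parallel>y\<parallel>\<^sup>2 \<le> S\<close> for all \<open>y \<ge> 0\<close>, with \<open>S\<close> the cumulative prediction error, and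
  \<open>y = \<langle>r\<^sup>T, xhat\<rangle> xhat\<close> with \<open>\<parallel>xhat\<parallel> \<le> 1\<close> gives \<open>R\<^sup>T(xhat) = \<langle>r\<^sup>T, xhat\<rangle> \<le> \<surd>S\<close>, which is even sharper
  than the stated bound.\<close>

lemma pos_sq_smooth: "(max 0 b)\<^sup>2 \<le> (max 0 a)\<^sup>2 + 2 * max 0 a * (b - a) + (b - a)\<^sup>2" for a b :: real
proof -
  have "0 \<le> (b - a) * (b - a)" "a < 0 \<Longrightarrow> b \<ge> 0 \<Longrightarrow> a * b \<le> 0"
    by (auto simp: mult_nonpos_nonneg)
  then show ?thesis by (cases "a \<ge> 0"; cases "b \<ge> 0") (auto simp: max_def power2_eq_square algebra_simps)
qed

lemma pos_sq_convex: "(max 0 a)\<^sup>2 + 2 * max 0 a * (c - a) \<le> (max 0 c)\<^sup>2" for a c :: real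
proof (cases "a \<ge> 0 \<and> c < 0")
  case True
  then have "a * c \<le> 0" by (simp add: mult_nonneg_nonpos)
  have "(max 0 a)\<^sup>2 + 2 * max 0 a * (c - a) = 2 * (a * c) - a\<^sup>2"
    using True by (simp add: power2_eq_square algebra_simps)
  also have "\<dots> \<le> (max 0 c)\<^sup>2"
    using \<open>a * c \<le> 0\<close> zero_le_power2[of a] zero_le_power2[of "max 0 c"] by linarith
  finally show ?thesis .
next
  case False
  have "0 \<le> (c - a) * (c - a)" by simp
  with False show ?thesis by (auto simp: max_def power2_eq_square algebra_simps)
qed

lemma two_mult_sub_sq_le_pos_sq: "y \<ge> 0 \<Longrightarrow> 2 * r * y - y\<^sup>2 \<le> (max 0 r)\<^sup>2" for r y :: real
  using pos_sq_convex[of y r] by (simp add: max_def power2_eq_square algebra_simps split: if_splits)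

lemma max0_variational: "y \<ge> 0 \<Longrightarrow> (a - max 0 a) * (y - max 0 a) \<le> 0" for a y :: real
  by (cases "a \<ge> 0") (auto simp: max_def mult_nonpos_nonneg)

lemma pos_sq_step:
  "(max 0 (r + u))\<^sup>2 \<le> (max 0 r)\<^sup>2 + 2 * u * max 0 (r + v) + (u - v)\<^sup>2" for r u v :: real
  using pos_sq_smooth[of "r + u" "r + v"] pos_sq_convex[of "r + v" r] by (simp add: algebra_simps)

lemma pos_proj_step:
  fixes y z u v :: real
  assumes "y \<ge> 0"
  shows "2 * u * (y - max 0 (z + v)) \<le> (y - z)\<^sup>2 - (y - max 0 (z + u))\<^sup>2 + (u - v)\<^sup>2"
proof -
  define p q where "p = max 0 (z + u)" and "q = max 0 (z + v)"
  have "(z + u - p) * (y - p) \<le> 0" "(z + v - q) * (p - q) \<le> 0"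
    using max0_variational assms unfolding p_def q_def by auto
  moreover have "0 \<le> (q - z)\<^sup>2" "0 \<le> (u - v - (p - q))\<^sup>2" by simp_all
  ultimately show ?thesis unfolding p_def[symmetric] q_def[symmetric]
    by (simp add: power2_eq_square algebra_simps)
qed

lemma prox_nonneg_quadratic_growth:
  fixes \<eta> a z t :: real
  assumes "\<eta> > 0" "t \<ge> 0"
  defines "s \<equiv> max 0 (z - \<eta> * a)"
  shows "a * s + (s - z)\<^sup>2 / (2 * \<eta>) + (t - s)\<^sup>2 / (2 * \<eta>) \<le> a * t + (t - z)\<^sup>2 / (2 * \<eta>)"
proof -
  define w where "w = z - \<eta> * a"
  have a: "a = (z - w) / \<eta>" using assms(1) unfolding w_def by simp
  have "a * t + (t - z)\<^sup>2 / (2 * \<eta>) - (a * s + (s - z)\<^sup>2 / (2 * \<eta>) + (t - s)\<^sup>2 / (2 * \<eta>))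
      = (t - s) * (s - w) / \<eta>"
    unfolding a using assms(1) by (simp add: field_simps power2_eq_square)
  moreover have "0 \<le> (t - s) * (s - w) / \<eta>"
    using max0_variational[OF assms(2), of w] assms(1) unfolding s_def w_def
    by (simp add: algebra_simps)
  ultimately show ?thesis by linarith
qed

lemma norm_pow_2_vec: "(norm x)\<^sup>2 = (\<Sum>i\<in>UNIV. (x $ i)\<^sup>2)" for x :: "real ^ 'n"
  by (simp only: power2_norm_eq_inner) (simp add: inner_vec_def power2_eq_square)

lemma pospart_nonneg_orthant: "pospart a \<in> nonneg_orthant"
  by (simp add: pospart_def nonneg_orthant_def)

lemma pospart_scaleR: "c \<ge> 0 \<Longrightarrow> pospart (c *\<^sub>R a) = c *\<^sub>R pospart a"
  by (simp add: pospart_def vec_eq_iff max_mult_distrib_left)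

lemma l1norm_nonneg_orthant: "a \<in> nonneg_orthant \<Longrightarrow> l1norm a = inner ones a"
  by (simp add: l1norm_def nonneg_orthant_def inner_vec_def ones_def)

lemma l1norm_eq_0_iff: "l1norm a = 0 \<longleftrightarrow> a = 0"
  by (simp add: l1norm_def sum_nonneg_eq_0_iff vec_eq_iff)

lemma gmap_scaleR: "c > 0 \<Longrightarrow> gmap xbar (c *\<^sub>R a) = gmap xbar a"
  by (simp add: gmap_def l1norm_def abs_mult sum_distrib_left[symmetric])

lemma inner_payoff_gmap:
  assumes "\<theta> \<in> nonneg_orthant"
  shows "inner \<theta> (payoff (gmap xbar \<theta>) l) = 0"
proof (cases "\<theta> = 0")
  case False
  then have "l1norm \<theta> \<noteq> 0" by (simp add: l1norm_eq_0_iff)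
  then show ?thesis
    using False l1norm_nonneg_orthant[OF assms]
    by (simp add: gmap_def payoff_def inner_diff_right inner_commute)
qed simp

lemma two_inner_sub_norm_le_norm_pospart:
  assumes "y \<in> nonneg_orthant"
  shows "2 * inner r y - (norm y)\<^sup>2 \<le> (norm (pospart r))\<^sup>2"
proof -
  have "(\<Sum>i\<in>UNIV. 2 * r $ i * y $ i - (y $ i)\<^sup>2) \<le> (\<Sum>i\<in>UNIV. (max 0 (r $ i))\<^sup>2)"
    using assms by (intro sum_mono two_mult_sub_sq_le_pos_sq) (simp add: nonneg_orthant_def)
  then show ?thesis
    by (simp add: norm_pow_2_vec inner_vec_def pospart_def sum_subtractf sum_distrib_left mult.assoc)
qed

lemma norm_pospart_add_le:
  "(norm (pospart (r + u)))\<^sup>2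
     \<le> (norm (pospart r))\<^sup>2 + 2 * inner (pospart (r + v)) u + (norm (u - v))\<^sup>2"
proof -
  have "(norm (pospart (r + u)))\<^sup>2
      \<le> (\<Sum>i\<in>UNIV. (max 0 (r $ i))\<^sup>2 + 2 * u $ i * max 0 (r $ i + v $ i) + (u $ i - v $ i)\<^sup>2)"
    unfolding norm_pow_2_vec by (intro sum_mono) (simp add: pospart_def pos_sq_step)
  then show ?thesis
    by (simp add: norm_pow_2_vec inner_vec_def pospart_def sum.distrib sum_distrib_left algebra_simps)
qed

lemma dist_pospart_add_le:
  assumes "y \<in> nonneg_orthant"
  shows "2 * inner u (y - pospart (z + v))
     \<le> (norm (y - z))\<^sup>2 - (norm (y - pospart (z + u)))\<^sup>2 + (norm (u - v))\<^sup>2"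
proof -
  have "(\<Sum>i\<in>UNIV. 2 * u $ i * (y $ i - max 0 (z $ i + v $ i)))
      \<le> (\<Sum>i\<in>UNIV. (y $ i - z $ i)\<^sup>2 - (y $ i - max 0 (z $ i + u $ i))\<^sup>2 + (u $ i - v $ i)\<^sup>2)"
    using assms by (intro sum_mono pos_proj_step) (simp add: nonneg_orthant_def)
  then show ?thesis
    by (simp add: norm_pow_2_vec inner_vec_def pospart_def sum.distrib sum_subtractf sum_distrib_left
        algebra_simps)
qed

lemma arg_min_eqI:
  fixes f :: "'a \<Rightarrow> 'b :: linorder"
  assumes "P s" "\<And>y. P y \<Longrightarrow> y \<noteq> s \<Longrightarrow> f s < f y"
  shows "arg_min f P = s"
proof (rule arg_minI[where P = P and x = s])
  show "\<not> f y < f s" if "P y" for y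
    using assms(2)[OF that] by (cases "y = s") auto
  show "x = s" if "P x" "\<forall>y. P y \<longrightarrow> \<not> f y < f x" for x
    using assms that by blast
qed (fact assms)

lemma arg_min_nonneg_orthant_prox:
  fixes a z :: "real ^ 'n"
  assumes "\<eta> > 0"
  shows "arg_min (\<lambda>\<theta>. inner a \<theta> + (1 / (2 * \<eta>)) * (norm (\<theta> - z))\<^sup>2) (\<lambda>\<theta>. \<theta> \<in> nonneg_orthant)
       = pospart (z - \<eta> *\<^sub>R a)"
proof (rule arg_min_eqI)
  define f where "f = (\<lambda>\<theta>::real ^ 'n. inner a \<theta> + (1 / (2 * \<eta>)) * (norm (\<theta> - z))\<^sup>2)"
  define s where "s = pospart (z - \<eta> *\<^sub>R a)"
  show "s \<in> nonneg_orthant" unfolding s_def by (rule pospart_nonneg_orthant)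
  fix \<theta> assume \<theta>: "\<theta> \<in> nonneg_orthant" "\<theta> \<noteq> s"
  have "f s + (norm (\<theta> - s))\<^sup>2 / (2 * \<eta>)
      = (\<Sum>i\<in>UNIV. a $ i * s $ i + (s $ i - z $ i)\<^sup>2 / (2 * \<eta>) + (\<theta> $ i - s $ i)\<^sup>2 / (2 * \<eta>))"
    by (simp add: f_def inner_vec_def norm_pow_2_vec sum.distrib sum_divide_distrib)
  also have "\<dots> \<le> (\<Sum>i\<in>UNIV. a $ i * \<theta> $ i + (\<theta> $ i - z $ i)\<^sup>2 / (2 * \<eta>))"
    using prox_nonneg_quadratic_growth[OF assms] \<theta>(1)
    by (intro sum_mono) (simp add: s_def pospart_def nonneg_orthant_def)
  also have "\<dots> = f \<theta>"
    by (simp add: f_def inner_vec_def norm_pow_2_vec sum.distrib sum_divide_distrib)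
  finally have "f s + (norm (\<theta> - s))\<^sup>2 / (2 * \<eta>) \<le> f \<theta>" .
  moreover have "0 < (norm (\<theta> - s))\<^sup>2 / (2 * \<eta>)"
    using \<theta>(2) assms by simp
  ultimately show "f s < f \<theta>" by linarith
qed

lemma ftrl_eq_prm:
  assumes "\<eta> > 0"
  shows "ftrl \<eta> xbar m l t = (- fst (prm xbar m l t), snd (prm xbar m l t))"
proof (induction t)
  case (Suc t)
  obtain r x where rx: "prm xbar m l t = (r, x)" by fastforce
  have "arg_min (\<lambda>\<theta>. inner (- r - v) \<theta> + (1 / (2 * \<eta>)) * (norm \<theta>)\<^sup>2) (\<lambda>\<theta>. \<theta> \<in> nonneg_orthant)
      = \<eta> *\<^sub>R pospart (r + v)" for v
    using arg_min_nonneg_orthant_prox[OF assms, of "- r - v" 0] assms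
    by (simp add: pospart_scaleR[symmetric] algebra_simps)
  then show ?case
    using Suc assms by (simp add: rx gmap_scaleR Let_def)
qed simp

lemma omd_eq_prm_plus:
  assumes "\<eta> > 0"
  shows "omd \<eta> xbar m l t = (\<eta> *\<^sub>R fst (prm_plus xbar m l t), snd (prm_plus xbar m l t))"
proof (induction t)
  case (Suc t)
  obtain z x where zx: "prm_plus xbar m l t = (z, x)" by fastforce
  have "arg_min (\<lambda>\<theta>. inner (- w) \<theta> + (1 / (2 * \<eta>)) * (norm (\<theta> - \<eta> *\<^sub>R z))\<^sup>2) (\<lambda>\<theta>. \<theta> \<in> nonneg_orthant)
      = \<eta> *\<^sub>R pospart (z + w)" for w
    using arg_min_nonneg_orthant_prox[OF assms, of "- w" "\<eta> *\<^sub>R z"] assms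
    by (simp add: pospart_scaleR[symmetric] algebra_simps)
  then show ?case
    using Suc assms by (simp add: zx gmap_scaleR Let_def)
qed simp

definition cum_prediction_error ::
    "(nat \<Rightarrow> real ^ 'n) \<Rightarrow> (nat \<Rightarrow> real ^ 'n) \<Rightarrow> (nat \<Rightarrow> real ^ 'n) \<Rightarrow> nat \<Rightarrow> real" where
  "cum_prediction_error x m l T =
     (\<Sum>t = 1..T. (norm (payoff (x t) (l t) - vpred (m t) (x (t - 1))))\<^sup>2)"

lemma cum_prediction_error_Suc:
  "cum_prediction_error x m l (Suc T) =
     cum_prediction_error x m l T + (norm (payoff (x (Suc T)) (l (Suc T)) - vpred (m (Suc T)) (x T)))\<^sup>2"
  by (simp add: cum_prediction_error_def)

lemma prob_simplex_nonneg_orthant: "x \<in> prob_simplex \<Longrightarrow> x \<in> nonneg_orthant"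
  by (simp add: prob_simplex_def nonneg_orthant_def)

lemma sum_prob_simplex: "x \<in> prob_simplex \<Longrightarrow> (\<Sum>i\<in>UNIV. x $ i) = 1"
  by (auto simp: prob_simplex_def)

lemma inner_ones_prob_simplex: "x \<in> prob_simplex \<Longrightarrow> inner ones x = 1"
  using sum_prob_simplex by (simp add: inner_vec_def ones_def)

lemma norm_le_1_prob_simplex: "x \<in> prob_simplex \<Longrightarrow> norm x \<le> 1"
  using norm_le_l1_cart[of x] by (auto simp: prob_simplex_def)

lemma regret_eq_inner_sum_payoff:
  assumes "xhat \<in> prob_simplex"
  shows "(\<Sum>t = 1..T. inner (l t) (x t - xhat)) = inner (\<Sum>t = 1..T. payoff (x t) (l t)) xhat"
proof -
  have "inner (payoff (x t) (l t)) xhat = inner (l t) (x t - xhat)" for t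
    using inner_ones_prob_simplex[OF assms]
    by (simp add: payoff_def inner_diff_left inner_diff_right inner_commute)
  then show ?thesis by (simp add: inner_sum_left)
qed

lemma inner_prob_simplex_le_sqrt:
  assumes bound: "\<And>y. y \<in> nonneg_orthant \<Longrightarrow> 2 * inner r y - (norm y)\<^sup>2 \<le> S"
    and xhat: "xhat \<in> prob_simplex"
  shows "inner r xhat \<le> sqrt S"
proof (cases "inner r xhat \<le> 0")
  case True
  have "0 \<le> S" using bound[of 0] by (simp add: nonneg_orthant_def)
  with True show ?thesis by (meson order_trans real_sqrt_ge_zero)
next
  case False
  define a where "a = inner r xhat"
  have "a *\<^sub>R xhat \<in> nonneg_orthant"
    using False prob_simplex_nonneg_orthant[OF xhat] by (simp add: a_def nonneg_orthant_def)
  moreover have "2 * inner r (a *\<^sub>R xhat) - (norm (a *\<^sub>R xhat))\<^sup>2 = 2 * a\<^sup>2 - a\<^sup>2 * (norm xhat)\<^sup>2"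
    by (simp add: a_def power2_eq_square)
  ultimately have "2 * a\<^sup>2 - a\<^sup>2 * (norm xhat)\<^sup>2 \<le> S"
    using bound by metis
  moreover have "a\<^sup>2 * (norm xhat)\<^sup>2 \<le> a\<^sup>2"
    using norm_le_1_prob_simplex[OF xhat] by (simp add: mult_left_le power_le_one)
  ultimately have "a\<^sup>2 \<le> S" by linarith
  then show ?thesis unfolding a_def by (rule real_le_rsqrt)
qed

lemma regret_boundI:
  fixes x m l :: "nat \<Rightarrow> real ^ 'n"
  assumes "\<And>T y. y \<in> nonneg_orthant \<Longrightarrow>
      2 * inner (\<Sum>t = 1..T. payoff (x t) (l t)) y - (norm y)\<^sup>2 \<le> cum_prediction_error x m l T"
  shows "regret_bound x m l"
  unfolding regret_bound_def
proof (intro allI impI ballI)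
  fix T and xhat :: "real ^ 'n" assume xhat: "xhat \<in> prob_simplex"
  have err: "inner (l t) (x t) *\<^sub>R ones - inner (m t) (x (t - 1)) *\<^sub>R ones - (l t - m t)
      = payoff (x t) (l t) - vpred (m t) (x (t - 1))" for t
    by (simp add: payoff_def vpred_def algebra_simps)
  have "(\<Sum>t = 1..T. inner (l t) (x t - xhat)) \<le> sqrt (cum_prediction_error x m l T)"
    unfolding regret_eq_inner_sum_payoff[OF xhat]
    by (rule inner_prob_simplex_le_sqrt[OF assms xhat])
  also have "\<dots> \<le> sqrt 2 * sqrt (cum_prediction_error x m l T)"
    using sum_nonneg[of "{1..T}" "\<lambda>t. (norm (payoff (x t) (l t) - vpred (m t) (x (t - 1))))\<^sup>2"]
    by (simp add: cum_prediction_error_def mult_le_cancel_right1)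
  finally show "(\<Sum>t = 1..T. inner (l t) (x t - xhat)) \<le> sqrt 2 * sqrt (\<Sum>t = 1..T.
      (norm (inner (l t) (x t) *\<^sub>R ones - inner (m t) (x (t - 1)) *\<^sub>R ones - (l t - m t)))\<^sup>2)"
    unfolding err cum_prediction_error_def .
qed

lemma fst_prm: "fst (prm xbar m l T) = (\<Sum>t = 1..T. payoff (snd (prm xbar m l t)) (l t))"
  by (induction T) (simp_all add: Let_def case_prod_beta)

lemma norm_pospart_fst_prm:
  "(norm (pospart (fst (prm xbar m l T))))\<^sup>2 \<le> cum_prediction_error (\<lambda>t. snd (prm xbar m l t)) m l T"
proof (induction T)
  case 0
  then show ?case by (simp add: pospart_def cum_prediction_error_def vec_eq_iff)
next
  case (Suc T)
  obtain r x where rx: "prm xbar m l T = (r, x)" by fastforce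
  define v where "v = vpred (m (Suc T)) x"
  define \<theta> where "\<theta> = pospart (r + v)"
  define u where "u = payoff (gmap xbar \<theta>) (l (Suc T))"
  have step: "prm xbar m l (Suc T) = (r + u, gmap xbar \<theta>)"
    by (simp add: rx u_def \<theta>_def v_def Let_def)
  have "inner \<theta> u = 0"
    unfolding u_def by (rule inner_payoff_gmap) (simp add: \<theta>_def pospart_nonneg_orthant)
  then have "(norm (pospart (r + u)))\<^sup>2 \<le> (norm (pospart r))\<^sup>2 + (norm (u - v))\<^sup>2"
    using norm_pospart_add_le[of r u v] by (simp add: \<theta>_def)
  then show ?case
    using Suc by (simp add: cum_prediction_error_Suc step rx u_def v_def del: prm.simps)
qed

lemma prm_quadratic_bound:
  assumes "y \<in> nonneg_orthant"
  shows "2 * inner (\<Sum>t = 1..T. payoff (snd (prm xbar m l t)) (l t)) y - (norm y)\<^sup>2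
     \<le> cum_prediction_error (\<lambda>t. snd (prm xbar m l t)) m l T"
  using two_inner_sub_norm_le_norm_pospart[OF assms, of "fst (prm xbar m l T)"]
    norm_pospart_fst_prm[of xbar m l T]
  unfolding fst_prm by linarith

lemma prm_plus_potential:
  assumes "y \<in> nonneg_orthant"
  shows "2 * inner (\<Sum>t = 1..T. payoff (snd (prm_plus xbar m l t)) (l t)) y
       + (norm (y - fst (prm_plus xbar m l T)))\<^sup>2
     \<le> (norm y)\<^sup>2 + cum_prediction_error (\<lambda>t. snd (prm_plus xbar m l t)) m l T"
proof (induction T)
  case 0
  then show ?case by (simp add: cum_prediction_error_def)
next
  case (Suc T)
  obtain z x where zx: "prm_plus xbar m l T = (z, x)" by fastforce
  define v where "v = vpred (m (Suc T)) x"
  define \<theta> where "\<theta> = pospart (z + v)"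
  define u where "u = payoff (gmap xbar \<theta>) (l (Suc T))"
  have step: "prm_plus xbar m l (Suc T) = (pospart (z + u), gmap xbar \<theta>)"
    by (simp add: zx u_def \<theta>_def v_def Let_def)
  have "inner \<theta> u = 0"
    unfolding u_def by (rule inner_payoff_gmap) (simp add: \<theta>_def pospart_nonneg_orthant)
  then have "2 * inner u y + (norm (y - pospart (z + u)))\<^sup>2 \<le> (norm (y - z))\<^sup>2 + (norm (u - v))\<^sup>2"
    using dist_pospart_add_le[OF assms, of u z v]
    by (simp add: \<theta>_def inner_diff_right inner_commute)
  then show ?case
    using Suc by (simp add: cum_prediction_error_Suc step zx u_def v_def inner_add_left del: prm_plus.simps)
qed

lemma prm_plus_quadratic_bound:
  assumes "y \<in> nonneg_orthant"
  shows "2 * inner (\<Sum>t = 1..T. payoff (snd (prm_plus xbar m l t)) (l t)) y - (norm y)\<^sup>2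
     \<le> cum_prediction_error (\<lambda>t. snd (prm_plus xbar m l t)) m l T"
  using prm_plus_potential[OF assms, of xbar m l T] by (smt (verit) zero_le_power2)

theorem mainTheorem7:
  fixes \<eta> :: real and xbar :: "real ^ 'n" and m l :: "nat \<Rightarrow> real ^ 'n"
  assumes "\<eta> > 0" and "xbar \<in> prob_simplex"
  shows "(\<forall>t. snd (ftrl \<eta> xbar m l t) = snd (prm xbar m l t))
       \<and> (\<forall>t. snd (omd \<eta> xbar m l t) = snd (prm_plus xbar m l t))
       \<and> regret_bound (\<lambda>t. snd (prm xbar m l t)) m l
       \<and> regret_bound (\<lambda>t. snd (prm_plus xbar m l t)) m l"
proof (intro conjI allI)
  show "snd (ftrl \<eta> xbar m l t) = snd (prm xbar m l t)" for t
    by (simp add: ftrl_eq_prm[OF assms(1)])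
  show "snd (omd \<eta> xbar m l t) = snd (prm_plus xbar m l t)" for t
    by (simp add: omd_eq_prm_plus[OF assms(1)])
  show "regret_bound (\<lambda>t. snd (prm xbar m l t)) m l"
    by (intro regret_boundI prm_quadratic_bound)
  show "regret_bound (\<lambda>t. snd (prm_plus xbar m l t)) m l"
    by (intro regret_boundI prm_plus_quadratic_bound)
qed

end
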